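(* Let $\lambda>0$, $d_{\mathrm H},d_{\mathrm V}>0$ and positive integers $N_{\mathrm H},N_{\mathrm V}$, $N=N_{\mathrm H}N_{\mathrm V}$. For $n=1,\dots,N$ let $i(n)=\mathrm{mod}(n-1,N_{\mathrm H})$, $j(n)=\lfloor (n-1)/N_{\mathrm H}\rfloor$ and $\mathbf u_n=[0,\ i(n)d_{\mathrm H},\ j(n)d_{\mathrm V}]^{\mathrm T}\in\mathbb R^3$. For angles $(\varphi,\theta)$ define the wave vector $\mathbf k(\varphi,\theta)=\frac{2\pi}{\lambda}[\cos\theta\cos\varphi,\ \cos\theta\sin\varphi,\ \sin\theta]^{\mathrm T}$ and the array response vector $\mathbf a(\varphi,\theta)=[e^{\mathrm i\,\mathbf k(\varphi,\theta)^{\mathrm T}\mathbf u_1},\dots,e^{\mathrm i\,\mathbf k(\varphi,\theta)^{\mathrm T}\mathbf u_N}]^{\mathrm T}\in\mathbb C^N$. Let $(\varphi,\theta)$ be random with probability density $f(\varphi,\theta)=\frac{\cos\theta}{2\pi}$ on $[-\pi/2,\pi/2]\times[-\pi/2,\pi/2]$ (isotropic scattering in the half-space in front of the surface), and let $\mathbf R=\mathbb E\{\mathbf a(\varphi,\theta)\mathbf a(\varphi,\theta)^{\mathrm H}\}\in\mathbb C^{N\times N}$. Then for all $n,m\in\{1,\dots,N\}$, $$[\mathbf R]_{n,m}=\mathrm{sinc}\!\left(\frac{2\|\mathbf u_n-\mathbf u_m\|}{\lambda}\right),$$ where $\mathrm{sinc}(x)=\sin(\pi x)/(\pi x)$ (with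 $\mathrm{sinc}(0)=1$).
   Context: This models a reconfigurable intelligent surface (RIS) of $N$ elements of size $d_{\mathrm H}\times d_{\mathrm V}$ placed edge-to-edge on a rectangular grid in the $yz$-plane, indexed row by row; $\lambda$ is the wavelength; $\varphi$ is the azimuth and $\theta$ the elevation angle of an impinging plane wave; $\mathrm i$ is the imaginary unit and ${}^{\mathrm H}$ denotes conjugate transpose. *)

theory Defs
  imports "HOL-Probability.Probability"
begin

definition nsinc :: "real \<Rightarrow> real" where
  "nsinc x = (if x = 0 then 1 else sin (pi * x) / (pi * x))"

definition elem_pos :: "real \<Rightarrow> real \<Rightarrow> nat \<Rightarrow> nat \<Rightarrow> real^3" where
  "elem_pos dH dV NH n =
     vector [0, real ((n - 1) mod NH) * dH, real ((n - 1) div NH) * dV]"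

definition wave_vec :: "real \<Rightarrow> real \<Rightarrow> real \<Rightarrow> real^3" where
  "wave_vec lam \<phi> \<theta> =
     (2 * pi / lam) *\<^sub>R vector [cos \<theta> * cos \<phi>, cos \<theta> * sin \<phi>, sin \<theta>]"

definition array_resp :: "real \<Rightarrow> real \<Rightarrow> real \<Rightarrow> nat \<Rightarrow> nat \<Rightarrow> real \<Rightarrow> real \<Rightarrow> complex" where
  "array_resp lam dH dV NH n \<phi> \<theta> =
     exp (\<i> * complex_of_real (wave_vec lam \<phi> \<theta> \<bullet> elem_pos dH dV NH n))"

definition aoa_pdf :: "real \<times> real \<Rightarrow> real" where
  "aoa_pdf p = indicator ({-pi/2..pi/2} \<times> {-pi/2..pi/2}) p * cos (snd p) / (2 * pi)"

definition aoa_measure :: "(real \<times> real) measure" where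
  "aoa_measure = density lborel (\<lambda>p. ennreal (aoa_pdf p))"

definition spatial_corr :: "real \<Rightarrow> real \<Rightarrow> real \<Rightarrow> nat \<Rightarrow> nat \<Rightarrow> nat \<Rightarrow> complex" where
  "spatial_corr lam dH dV NH n m =
     (\<integral>p. array_resp lam dH dV NH n (fst p) (snd p) *
           cnj (array_resp lam dH dV NH m (fst p) (snd p)) \<partial>aoa_measure)"

end

theory Submission
  imports Defs
begin

text \<open>
  Put \<open>w = 2\<pi>/\<lambda> (u\<^sub>n - u\<^sub>m)\<close>, a vector of the yz-plane, and
  \<open>E = exp(i \<langle>w, (cos \<theta> sin \<phi>, sin \<theta>)\<rangle>)\<close>. Then \<open>[R]\<^sub>n\<^sub>m\<close> is \<open>1/(2\<pi>)\<close> times the integral of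
  \<open>cos \<theta> E\<close> over the square of angles. As \<open>cos \<theta> d\<phi> d\<theta>\<close> is the area element of the front
  hemisphere, this integral depends only on \<open>|w|\<close>. To prove it, rotate \<open>w\<close> by an angle \<open>s\<close>:
  the \<open>s\<close>-derivative of \<open>cos \<theta> E\<close> is \<open>\<partial>\<^sub>\<phi> A + \<partial>\<^sub>\<theta> B\<close> with \<open>A = sin \<theta> cos \<phi> E\<close> and
  \<open>B = - sin \<phi> cos \<theta> E\<close> (by \<open>sin\<^sup>2 \<phi> + cos\<^sup>2 \<phi> = 1\<close>); \<open>A\<close> vanishes at \<open>\<phi> = \<plusminus>\<pi>/2\<close> and \<open>B\<close> at
  \<open>\<theta> = \<plusminus>\<pi>/2\<close>, so the derivative integrates to zero. For \<open>w\<close> on the z-axis the integral is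
  elementary: \<open>\<integral> cos \<theta> exp(i r sin \<theta>) d\<theta> = 2 sin r / r\<close>.
\<close>

lemma integral_cbox_divergence_eq_0:
  fixes A B A' B' :: "real \<Rightarrow> real \<Rightarrow> 'a::banach"
  assumes "a \<le> b" "c \<le> d"
    and A': "\<And>x y. x \<in> {a..b} \<Longrightarrow> y \<in> {c..d} \<Longrightarrow>
                ((\<lambda>x. A x y) has_vector_derivative A' x y) (at x within {a..b})"
    and B': "\<And>x y. x \<in> {a..b} \<Longrightarrow> y \<in> {c..d} \<Longrightarrow>
                ((\<lambda>y. B x y) has_vector_derivative B' x y) (at y within {c..d})"
    and cont_A': "continuous_on (cbox (a, c) (b, d)) (\<lambda>(x, y). A' x y)"
    and cont_B': "continuous_on (cbox (a, c) (b, d)) (\<lambda>(x, y). B' x y)"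
    and A_bdry: "\<And>y. y \<in> {c..d} \<Longrightarrow> A a y = A b y"
    and B_bdry: "\<And>x. x \<in> {a..b} \<Longrightarrow> B x c = B x d"
  shows "integral (cbox (a, c) (b, d)) (\<lambda>(x, y). A' x y + B' x y) = 0"
proof -
  have int_A': "integral {a..b} (\<lambda>x. A' x y) = 0" if "y \<in> {c..d}" for y
    using fundamental_theorem_of_calculus[OF \<open>a \<le> b\<close> A'[OF _ that]] A_bdry[OF that]
    by (simp add: integral_unique)
  have int_B': "integral {c..d} (\<lambda>y. B' x y) = 0" if "x \<in> {a..b}" for x
    using fundamental_theorem_of_calculus[OF \<open>c \<le> d\<close> B'[OF that]] B_bdry[OF that]
    by (simp add: integral_unique)
  have "integral (cbox (a, c) (b, d)) (\<lambda>(x, y). A' x y + B' x y) =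
        integral (cbox (a, c) (b, d)) (\<lambda>(x, y). A' x y) + integral (cbox (a, c) (b, d)) (\<lambda>(x, y). B' x y)"
    using integral_add[OF integrable_continuous[OF cont_A'] integrable_continuous[OF cont_B']]
    by (simp add: case_prod_beta')
  also have "integral (cbox (a, c) (b, d)) (\<lambda>(x, y). A' x y) =
             integral {c..d} (\<lambda>y. integral {a..b} (\<lambda>x. A' x y))"
    using integral_prod_continuous[OF cont_A'] integral_swap_continuous[OF cont_A']
    by (simp add: cbox_interval)
  also have "\<dots> = 0"
    by (subst integral_cong[where g = "\<lambda>_. 0"]) (simp_all add: int_A')
  also have "integral (cbox (a, c) (b, d)) (\<lambda>(x, y). B' x y) =
             integral {a..b} (\<lambda>x. integral {c..d} (\<lambda>y. B' x y))"
    using integral_prod_continuous[OF cont_B'] by (simp add: cbox_interval)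
  also have "\<dots> = 0"
    by (subst integral_cong[where g = "\<lambda>_. 0"]) (simp_all add: int_B')
  finally show ?thesis
    by simp
qed

lemma has_vector_derivative_iexp_comp:
  assumes "(f has_real_derivative f') (at x within S)"
  shows "((\<lambda>x. iexp (f x)) has_vector_derivative \<i> * of_real f' * iexp (f x)) (at x within S)"
proof -
  have "((\<lambda>x. \<i> * of_real (f x)) has_vector_derivative \<i> * of_real f') (at x within S)"
    by (intro derivative_intros assms)
  from field_vector_diff_chain_within[OF this DERIV_exp[THEN has_field_derivative_at_within]]
  show ?thesis
    by (simp add: o_def)
qed

text \<open>The factor \<open>E\<close> for \<open>w = (c, d)\<close>; \<open>(cos \<theta> sin \<phi>, sin \<theta>)\<close> is the yz-projection of the
  unit direction of arrival.\<close>

definition plane_wave :: "real \<Rightarrow> real \<Rightarrow> real \<Rightarrow> real \<Rightarrow> complex" where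
  "plane_wave c d \<phi> \<theta> = iexp (c * cos \<theta> * sin \<phi> + d * sin \<theta>)"

lemma continuous_on_plane_wave [continuous_intros]:
  fixes c d f g :: "'a::t2_space \<Rightarrow> real"
  assumes "continuous_on S c" "continuous_on S d" "continuous_on S f" "continuous_on S g"
  shows "continuous_on S (\<lambda>p. plane_wave (c p) (d p) (f p) (g p))"
  unfolding plane_wave_def using assms by (auto intro!: continuous_intros)

lemma has_vector_derivative_plane_wave_azimuth:
  "((\<lambda>\<phi>. plane_wave c d \<phi> \<theta>) has_vector_derivative
     \<i> * of_real (c * cos \<theta> * cos \<phi>) * plane_wave c d \<phi> \<theta>) (at \<phi> within S)"
  unfolding plane_wave_def
  by (rule has_vector_derivative_iexp_comp) (auto intro!: derivative_eq_intros)

lemma has_vector_derivative_plane_wave_elevation: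
  "((\<lambda>\<theta>. plane_wave c d \<phi> \<theta>) has_vector_derivative
     \<i> * of_real (d * cos \<theta> - c * sin \<theta> * sin \<phi>) * plane_wave c d \<phi> \<theta>) (at \<theta> within S)"
  unfolding plane_wave_def
  by (rule has_vector_derivative_iexp_comp) (auto intro!: derivative_eq_intros)

lemma has_vector_derivative_plane_wave_rotation:
  "((\<lambda>s. plane_wave (r * cos s) (r * sin s) \<phi> \<theta>) has_vector_derivative
     \<i> * of_real (r * cos s * sin \<theta> - r * sin s * cos \<theta> * sin \<phi>) *
       plane_wave (r * cos s) (r * sin s) \<phi> \<theta>) (at s within S)"
  unfolding plane_wave_def
  by (rule has_vector_derivative_iexp_comp) (auto intro!: derivative_eq_intros)

abbreviation aoa_box :: "(real \<times> real) set" where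
  "aoa_box \<equiv> cbox (-(pi/2), -(pi/2)) (pi/2, pi/2)"

lemma integral_rotation_generator_eq_0:
  "integral aoa_box
     (\<lambda>(\<phi>, \<theta>). \<i> * of_real (cos \<theta> * (c * sin \<theta> - d * cos \<theta> * sin \<phi>)) * plane_wave c d \<phi> \<theta>) = 0"
proof -
  define A where "A \<phi> \<theta> = of_real (sin \<theta> * cos \<phi>) * plane_wave c d \<phi> \<theta>" for \<phi> \<theta>
  define B where "B \<phi> \<theta> = - of_real (sin \<phi> * cos \<theta>) * plane_wave c d \<phi> \<theta>" for \<phi> \<theta>
  define A' where "A' \<phi> \<theta> = of_real (- sin \<theta> * sin \<phi>) * plane_wave c d \<phi> \<theta> +
      of_real (sin \<theta> * cos \<phi>) * (\<i> * of_real (c * cos \<theta> * cos \<phi>) * plane_wave c d \<phi> \<theta>)"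
    for \<phi> \<theta>
  define B' where "B' \<phi> \<theta> = of_real (sin \<phi> * sin \<theta>) * plane_wave c d \<phi> \<theta> -
      of_real (sin \<phi> * cos \<theta>) * (\<i> * of_real (d * cos \<theta> - c * sin \<theta> * sin \<phi>) * plane_wave c d \<phi> \<theta>)"
    for \<phi> \<theta>
  have "((\<lambda>\<phi>. A \<phi> \<theta>) has_vector_derivative A' \<phi> \<theta>) (at \<phi> within S)" for \<phi> \<theta> S
    unfolding A_def A'_def
    by (auto intro!: derivative_eq_intros has_vector_derivative_plane_wave_azimuth)
  moreover
  have "((\<lambda>\<theta>. B \<phi> \<theta>) has_vector_derivative B' \<phi> \<theta>) (at \<theta> within S)" for \<phi> \<theta> S
    unfolding B_def B'_def
    by (auto intro!: derivative_eq_intros has_vector_derivative_plane_wave_elevation)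
  moreover
  have "continuous_on aoa_box (\<lambda>(\<phi>, \<theta>). A' \<phi> \<theta>)" "continuous_on aoa_box (\<lambda>(\<phi>, \<theta>). B' \<phi> \<theta>)"
    unfolding A'_def B'_def case_prod_beta' by (auto intro!: continuous_intros)
  ultimately
  have "integral aoa_box (\<lambda>(\<phi>, \<theta>). A' \<phi> \<theta> + B' \<phi> \<theta>) = 0"
    by (intro integral_cbox_divergence_eq_0[where A = A and B = B]) (auto simp: A_def B_def)
  moreover
  have "A' \<phi> \<theta> + B' \<phi> \<theta> =
      \<i> * of_real (cos \<theta> * (c * sin \<theta> - d * cos \<theta> * sin \<phi>)) * plane_wave c d \<phi> \<theta>" for \<phi> \<theta>
  proof -
    have "cos \<theta> * (c * sin \<theta> - d * cos \<theta> * sin \<phi>) =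
          sin \<theta> * cos \<phi> * (c * cos \<theta> * cos \<phi>) - sin \<phi> * cos \<theta> * (d * cos \<theta> - c * sin \<theta> * sin \<phi>)"
      using sin_cos_squared_add[of \<phi>] by algebra
    then show ?thesis
      unfolding A'_def B'_def by (simp add: algebra_simps)
  qed
  ultimately show ?thesis
    by simp
qed

definition hemisphere_ft :: "real \<Rightarrow> real \<Rightarrow> complex" where
  "hemisphere_ft c d = integral aoa_box (\<lambda>(\<phi>, \<theta>). of_real (cos \<theta>) * plane_wave c d \<phi> \<theta>)"

lemma hemisphere_ft_rotate:
  "hemisphere_ft (r * cos s) (r * sin s) = hemisphere_ft (r * cos t) (r * sin t)"
proof -
  define h where
    "h \<sigma> = (\<lambda>(\<phi>, \<theta>). of_real (cos \<theta>) * plane_wave (r * cos \<sigma>) (r * sin \<sigma>) \<phi> \<theta>)" for \<sigma>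
  define h' where
    "h' \<sigma> = (\<lambda>(\<phi>, \<theta>). \<i> * of_real (cos \<theta> * (r * cos \<sigma> * sin \<theta> - r * sin \<sigma> * cos \<theta> * sin \<phi>)) *
                   plane_wave (r * cos \<sigma>) (r * sin \<sigma>) \<phi> \<theta>)" for \<sigma>
  have ordered: "integral aoa_box (h s) = integral aoa_box (h t)" if "s \<le> t" for s t
  proof -
    have deriv: "((\<lambda>\<sigma>. h \<sigma> p) has_vector_derivative h' \<sigma> p) (at \<sigma> within {s..t})" for \<sigma> p
      by (cases p) (auto simp: h_def h'_def algebra_simps
          intro!: derivative_eq_intros has_vector_derivative_plane_wave_rotation)
    have FTC: "h t p - h s p = integral {s..t} (\<lambda>\<sigma>. h' \<sigma> p)" for p
      using integral_unique[OF fundamental_theorem_of_calculus[OF that deriv]] by simp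
    have "integral aoa_box (h t) - integral aoa_box (h s) = integral aoa_box (\<lambda>p. h t p - h s p)"
      by (intro integral_diff[symmetric] integrable_continuous)
        (auto simp: h_def case_prod_beta' intro!: continuous_intros)
    also have "\<dots> = integral aoa_box (\<lambda>p. integral (cbox s t) (\<lambda>\<sigma>. h' \<sigma> p))"
      by (simp add: FTC)
    also have "\<dots> = integral (cbox s t) (\<lambda>\<sigma>. integral aoa_box (h' \<sigma>))"
      by (rule integral_swap_continuous)
        (auto simp: h'_def case_prod_beta' intro!: continuous_intros)
    also have "\<dots> = 0"
      unfolding h'_def integral_rotation_generator_eq_0 by simp
    finally show ?thesis
      by simp
  qed
  moreover have "hemisphere_ft (r * cos \<sigma>) (r * sin \<sigma>) = integral aoa_box (h \<sigma>)" for \<sigma>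
    by (simp add: hemisphere_ft_def h_def)
  ultimately show ?thesis
    by (metis linorder_le_cases)
qed

lemma hemisphere_ft_polar: "hemisphere_ft c d = hemisphere_ft 0 (sqrt (c\<^sup>2 + d\<^sup>2))"
proof -
  define z where "z = Complex c d"
  have "c = cmod z * cos (Arg z)" "d = cmod z * sin (Arg z)"
    using arg_cong[OF rcis_cmod_Arg[of z], of Re] arg_cong[OF rcis_cmod_Arg[of z], of Im]
    by (simp_all add: z_def)
  then have "hemisphere_ft c d = hemisphere_ft 0 (cmod z)"
    using hemisphere_ft_rotate[of "cmod z" "Arg z" "pi / 2"] by simp
  also have "cmod z = sqrt (c\<^sup>2 + d\<^sup>2)"
    by (simp add: z_def cmod_def)
  finally show ?thesis .
qed

lemma has_integral_cos_iexp_sin: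
  "((\<lambda>\<theta>. of_real (cos \<theta>) * iexp (r * sin \<theta>)) has_integral of_real (2 * nsinc (r / pi)))
     {-(pi/2)..pi/2}"
proof (cases "r = 0")
  case True
  have "((\<lambda>\<theta>. of_real (sin \<theta>) :: complex) has_vector_derivative of_real (cos \<theta>)) (at \<theta> within S)"
    for \<theta> S
    by (auto intro!: derivative_eq_intros)
  from fundamental_theorem_of_calculus[of "-(pi/2)" "pi/2", OF _ this] True show ?thesis
    by (simp add: nsinc_def)
next
  case False
  have "((\<lambda>\<theta>. iexp (r * sin \<theta>)) has_vector_derivative
          \<i> * of_real (r * cos \<theta>) * iexp (r * sin \<theta>)) (at \<theta> within S)" for \<theta> S
    by (rule has_vector_derivative_iexp_comp) (auto intro!: derivative_eq_intros)
  from has_vector_derivative_divide[OF this, of "\<i> * of_real r"]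
  have "((\<lambda>\<theta>. iexp (r * sin \<theta>) / (\<i> * of_real r)) has_vector_derivative
          of_real (cos \<theta>) * iexp (r * sin \<theta>)) (at \<theta> within S)" for \<theta> S
    using False by (simp add: field_simps)
  from fundamental_theorem_of_calculus[of "-(pi/2)" "pi/2", OF _ this]
  have "((\<lambda>\<theta>. of_real (cos \<theta>) * iexp (r * sin \<theta>)) has_integral
          (iexp r - iexp (- r)) / (\<i> * of_real r)) {-(pi/2)..pi/2}"
    by (simp add: diff_divide_distrib)
  moreover have "iexp r - iexp (- r) = 2 * \<i> * of_real (sin r)"
    by (simp add: complex_eq_iff Re_exp Im_exp)
  then have "(iexp r - iexp (- r)) / (\<i> * of_real r) = of_real (2 * nsinc (r / pi))"
    using False by (simp add: nsinc_def)
  ultimately show ?thesis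
    by simp
qed

lemma hemisphere_ft_axis: "hemisphere_ft 0 r = of_real (2 * pi * nsinc (r / pi))"
proof -
  have "hemisphere_ft 0 r =
        integral {-(pi/2)..pi/2} (\<lambda>\<phi>. integral {-(pi/2)..pi/2} (\<lambda>\<theta>. of_real (cos \<theta>) * iexp (r * sin \<theta>)))"
    unfolding hemisphere_ft_def
    by (subst integral_prod_continuous) (auto simp: plane_wave_def cbox_interval case_prod_beta'
        intro!: continuous_intros)
  also have "\<dots> = integral {-(pi/2)..pi/2} (\<lambda>\<phi>. of_real (2 * nsinc (r / pi)))"
    using has_integral_cos_iexp_sin by (simp add: integral_unique)
  also have "\<dots> = of_real (2 * pi * nsinc (r / pi))"
    by (simp add: scaleR_conv_of_real)
  finally show ?thesis .
qed

lemma integral_aoa_measure: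
  fixes g :: "real \<times> real \<Rightarrow> complex"
  assumes "continuous_on UNIV g"
  shows "(\<integral>p. g p \<partial>aoa_measure) = integral aoa_box (\<lambda>p. of_real (cos (snd p) / (2 * pi)) * g p)"
proof -
  have aoa_box_eq: "aoa_box = {-pi/2..pi/2} \<times> {-pi/2..pi/2}"
    by (simp only: cbox_Pair_eq) (simp add: cbox_interval)
  have pdf_eq: "aoa_pdf = (\<lambda>p. indicator aoa_box p * (cos (snd p) / (2 * pi)))"
    by (auto simp: aoa_pdf_def aoa_box_eq)
  have "(\<integral>p. g p \<partial>aoa_measure) = (\<integral>p. aoa_pdf p *\<^sub>R g p \<partial>lborel)"
    unfolding aoa_measure_def
  proof (rule integral_density)
    show "g \<in> borel_measurable lborel"
      unfolding measurable_lborel2 using assms by (rule borel_measurable_continuous_onI)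
    show "aoa_pdf \<in> borel_measurable lborel"
      unfolding pdf_eq measurable_lborel2 by (intro borel_measurable_times borel_measurable_indicator
          borel_measurable_continuous_onI) (auto simp: borel_closed intro!: continuous_intros)
    show "AE p in lborel. 0 \<le> aoa_pdf p"
      by (auto simp: aoa_pdf_def indicator_def mem_Times_iff intro!: AE_I2 divide_nonneg_pos cos_ge_zero)
  qed
  also have "\<dots> = (\<integral>p. indicator aoa_box p *\<^sub>R (of_real (cos (snd p) / (2 * pi)) * g p) \<partial>lborel)"
    by (simp add: pdf_eq scaleR_conv_of_real mult.assoc)
  also have "\<dots> = integral aoa_box (\<lambda>p. of_real (cos (snd p) / (2 * pi)) * g p)"
  proof -
    have "set_integrable lborel aoa_box (\<lambda>p. of_real (cos (snd p) / (2 * pi)) * g p)"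
      unfolding set_integrable_def using assms
      by (intro borel_integrable_compact compact_cbox)
        (auto intro!: continuous_intros intro: continuous_on_subset)
    from set_borel_integral_eq_integral(2)[OF this] show ?thesis
      unfolding set_lebesgue_integral_def .
  qed
  finally show ?thesis .
qed

lemma integral_plane_wave_aoa_measure:
  "(\<integral>p. plane_wave c d (fst p) (snd p) \<partial>aoa_measure) = of_real (nsinc (sqrt (c\<^sup>2 + d\<^sup>2) / pi))"
proof -
  have "(\<integral>p. plane_wave c d (fst p) (snd p) \<partial>aoa_measure) =
        integral aoa_box (\<lambda>p. of_real (cos (snd p) / (2 * pi)) * plane_wave c d (fst p) (snd p))"
    by (rule integral_aoa_measure) (auto intro!: continuous_intros)
  also have "\<dots> = of_real (1 / (2 * pi)) * hemisphere_ft c d"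
    unfolding hemisphere_ft_def integral_mult_right[symmetric]
    by (rule integral_cong) (simp add: case_prod_beta')
  also have "\<dots> = of_real (nsinc (sqrt (c\<^sup>2 + d\<^sup>2) / pi))"
    by (subst hemisphere_ft_polar) (simp add: hemisphere_ft_axis)
  finally show ?thesis .
qed

lemma inner_wave_vec_yz:
  assumes "u $ 1 = 0"
  shows "wave_vec lam \<phi> \<theta> \<bullet> u = 2 * pi / lam * (u $ 2 * cos \<theta> * sin \<phi> + u $ 3 * sin \<theta>)"
  using assms by (simp add: wave_vec_def inner_vec_def sum_3 algebra_simps)

lemma norm_vec3_yz:
  fixes u :: "real^3"
  assumes "u $ 1 = 0"
  shows "norm u = sqrt ((u $ 2)\<^sup>2 + (u $ 3)\<^sup>2)"
  using assms by (simp add: norm_eq_sqrt_inner inner_vec_def sum_3 power2_eq_square)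

lemma iexp_mult_cnj: "iexp a * cnj (iexp b) = iexp (a - b)"
  by (simp add: exp_cnj algebra_simps flip: exp_add)

lemma array_resp_mult_cnj:
  "array_resp lam dH dV NH n \<phi> \<theta> * cnj (array_resp lam dH dV NH m \<phi> \<theta>) =
   iexp (wave_vec lam \<phi> \<theta> \<bullet> (elem_pos dH dV NH n - elem_pos dH dV NH m))"
  unfolding array_resp_def inner_diff_right by (rule iexp_mult_cnj)

theorem proposition1:
  fixes lam dH dV :: real and NH NV n m :: nat
  assumes "lam > 0" and "dH > 0" and "dV > 0" and "NH > 0" and "NV > 0"
    and "n \<in> {1..NH * NV}" and "m \<in> {1..NH * NV}"
  shows "spatial_corr lam dH dV NH n m =
    complex_of_real (nsinc (2 * norm (elem_pos dH dV NH n - elem_pos dH dV NH m) / lam))"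
proof -
  define u where "u = elem_pos dH dV NH n - elem_pos dH dV NH m"
  define k where "k = 2 * pi / lam"
  have "k > 0"
    using \<open>lam > 0\<close> by (simp add: k_def)
  have u1: "u $ 1 = 0"
    by (simp add: u_def elem_pos_def)
  have "(k * u $ 2)\<^sup>2 + (k * u $ 3)\<^sup>2 = k\<^sup>2 * ((u $ 2)\<^sup>2 + (u $ 3)\<^sup>2)"
    by (simp add: power_mult_distrib distrib_left)
  then have norm_eq: "sqrt ((k * u $ 2)\<^sup>2 + (k * u $ 3)\<^sup>2) = k * norm u"
    using \<open>k > 0\<close> by (simp add: real_sqrt_mult norm_vec3_yz[OF u1])
  have "array_resp lam dH dV NH n \<phi> \<theta> * cnj (array_resp lam dH dV NH m \<phi> \<theta>) =
        plane_wave (k * u $ 2) (k * u $ 3) \<phi> \<theta>" for \<phi> \<theta>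
    unfolding array_resp_mult_cnj u_def[symmetric] inner_wave_vec_yz[OF u1] plane_wave_def k_def
    by (rule arg_cong[where f = iexp]) (simp add: algebra_simps)
  then have "spatial_corr lam dH dV NH n m = of_real (nsinc (k * norm u / pi))"
    by (simp add: spatial_corr_def integral_plane_wave_aoa_measure norm_eq)
  also have "k * norm u / pi = 2 * norm u / lam"
    by (simp add: k_def)
  finally show ?thesis
    unfolding u_def .
qed

end
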